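(* Let $\alpha\in (0,1)$ be a real number and let $a_1,a_2,\ldots,a_n\in [0,\alpha]$ be reals with $\sum_{\ell=1}^n a_\ell=1$. Then the numbers $a_1,\ldots,a_n$ can be partitioned into $2\lceil 1/\alpha\rceil-1$ (possibly empty) groups such that the sum of the numbers in each group is at most $\alpha$. *)

theory Defs
  imports Complex_Main
begin

end

theory Submission
  imports Defs
begin

text \<open>Greedy packing: cut the sequence into the longest prefix of total at most \<alpha>, the next
  item, and the rest. If the rest is nonempty, prefix plus next item exceed \<alpha>, so the rest has
  total at most (k - 1)\<alpha> when the whole had total at most k\<alpha>. By induction, total at most k\<alpha>
  fits into 2k - 1 groups, and k = \<lceil>1/\<alpha>\<rceil> gives the claim.\<close>

definition bounded_grouping :: "('a \<Rightarrow> real) \<Rightarrow> real \<Rightarrow> nat \<Rightarrow> 'a set \<Rightarrow> ('a \<Rightarrow> nat) \<Rightarrow> bool" where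
  "bounded_grouping a \<alpha> m A g \<longleftrightarrow>
     (\<forall>l\<in>A. g l < m) \<and> (\<forall>j<m. (\<Sum>l\<in>{l\<in>A. g l = j}. a l) \<le> \<alpha>)"

lemma bounded_grouping_const:
  assumes "0 \<le> \<alpha>" and "sum a A \<le> \<alpha>" and "0 < m"
  shows "bounded_grouping a \<alpha> m A (\<lambda>_. 0)"
proof -
  have "{l\<in>A. 0 = j} = (if j = 0 then A else {})" for j :: nat by auto
  then show ?thesis
    using assms by (simp add: bounded_grouping_def)
qed

lemma bounded_grouping_glue:
  assumes g: "bounded_grouping a \<alpha> m A g" and h: "bounded_grouping a \<alpha> m' B h"
    and disjoint: "A \<inter> B = {}"
  shows "bounded_grouping a \<alpha> (m + m') (A \<union> B) (\<lambda>l. if l \<in> A then g l else m + h l)"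
  unfolding bounded_grouping_def
proof (intro conjI ballI allI impI)
  fix l assume "l \<in> A \<union> B"
  then show "(if l \<in> A then g l else m + h l) < m + m'"
    using g h by (auto simp: bounded_grouping_def)
next
  fix j assume j: "j < m + m'"
  show "(\<Sum>l\<in>{l\<in>A \<union> B. (if l \<in> A then g l else m + h l) = j}. a l) \<le> \<alpha>"
  proof (cases "j < m")
    case True
    then have "{l\<in>A \<union> B. (if l \<in> A then g l else m + h l) = j} = {l\<in>A. g l = j}"
      by auto
    then show ?thesis
      using g True by (simp add: bounded_grouping_def)
  next
    case False
    then have "{l\<in>A \<union> B. (if l \<in> A then g l else m + h l) = j} = {l\<in>B. h l = j - m}"
      using g disjoint by (auto simp: bounded_grouping_def)
    then show ?thesis
      using h False j by (simp add: bounded_grouping_def)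
  qed
qed

lemma longest_prefix_sum_le:
  fixes a :: "nat \<Rightarrow> real"
  assumes "0 \<le> \<alpha>" and "i \<le> N"
  obtains t where "i \<le> t" "t \<le> N" "(\<Sum>l\<in>{i..<t}. a l) \<le> \<alpha>"
    and "t < N \<Longrightarrow> \<alpha> < (\<Sum>l\<in>{i..<Suc t}. a l)"
proof -
  define T where "T = {t. i \<le> t \<and> t \<le> N \<and> (\<Sum>l\<in>{i..<t}. a l) \<le> \<alpha>}"
  have "finite T" "i \<in> T"
    using assms by (auto simp: T_def)
  then have "Max T \<in> T" and "Suc (Max T) \<notin> T"
    by (auto intro: Max_in dest: Max_ge)
  then show ?thesis
    by (intro that[of "Max T"]) (auto simp: T_def)
qed

lemma interval_bounded_grouping:
  fixes a :: "nat \<Rightarrow> real"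
  assumes "1 \<le> k" and "0 \<le> \<alpha>" and "i \<le> N"
    and "\<And>l. l \<in> {i..<N} \<Longrightarrow> a l \<le> \<alpha>"
    and "(\<Sum>l\<in>{i..<N}. a l) \<le> real k * \<alpha>"
  shows "\<exists>g. bounded_grouping a \<alpha> (2 * k - 1) {i..<N} g"
  using assms
proof (induction k arbitrary: i rule: nat_induct_at_least)
  case base
  then show ?case
    using bounded_grouping_const by fastforce
next
  case (Suc k)
  obtain t where it: "i \<le> t" "t \<le> N" and prefix: "(\<Sum>l\<in>{i..<t}. a l) \<le> \<alpha>"
    and overflow: "t < N \<Longrightarrow> \<alpha> < (\<Sum>l\<in>{i..<Suc t}. a l)"
    using longest_prefix_sum_le[OF Suc.prems(1,2)] by blast
  show ?case
  proof (cases "t = N")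
    case True
    then show ?thesis
      using bounded_grouping_const[OF Suc.prems(1) prefix] by auto
  next
    case False
    then have tN: "t < N" using it by simp
    have "(\<Sum>l\<in>{i..<N}. a l) = (\<Sum>l\<in>{i..<Suc t}. a l) + (\<Sum>l\<in>{Suc t..<N}. a l)"
      using it tN by (metis Suc_leI le_SucI sum.atLeastLessThan_concat)
    then have "(\<Sum>l\<in>{Suc t..<N}. a l) \<le> real k * \<alpha>"
      using overflow[OF tN] Suc.prems(4) by (simp add: algebra_simps)
    then obtain h where rest: "bounded_grouping a \<alpha> (2 * k - 1) {Suc t..<N} h"
      using Suc.IH[of "Suc t"] Suc.prems(1,3) tN it by auto
    have "bounded_grouping a \<alpha> 1 {t} (\<lambda>_. 0)"
      using Suc.prems(1,3) it tN by (intro bounded_grouping_const) auto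
    from bounded_grouping_glue[OF this rest]
    obtain h' where "bounded_grouping a \<alpha> (1 + (2 * k - 1)) ({t} \<union> {Suc t..<N}) h'"
      by auto
    from bounded_grouping_glue[OF bounded_grouping_const[OF Suc.prems(1) prefix, of 1] this]
    have "\<exists>g. bounded_grouping a \<alpha> (1 + (1 + (2 * k - 1))) ({i..<t} \<union> ({t} \<union> {Suc t..<N})) g"
      by auto
    moreover have "{i..<t} \<union> ({t} \<union> {Suc t..<N}) = {i..<N}"
      using it tN by auto
    ultimately show ?thesis
      using Suc.hyps by (simp add: algebra_simps)
  qed
qed

theorem lemma6p2:
  fixes \<alpha> :: real and n :: nat and a :: "nat \<Rightarrow> real"
  assumes "0 < \<alpha>" and "\<alpha> < 1"
    and "\<And>l. l \<in> {1..n} \<Longrightarrow> 0 \<le> a l \<and> a l \<le> \<alpha>"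
    and "(\<Sum>l=1..n. a l) = 1"
  shows "\<exists>g :: nat \<Rightarrow> nat.
           (\<forall>l\<in>{1..n}. g l < nat (2 * \<lceil>1 / \<alpha>\<rceil> - 1)) \<and>
           (\<forall>j < nat (2 * \<lceil>1 / \<alpha>\<rceil> - 1). (\<Sum>l\<in>{l\<in>{1..n}. g l = j}. a l) \<le> \<alpha>)"
proof -
  define k where "k = nat \<lceil>1 / \<alpha>\<rceil>"
  have ceiling_pos: "1 \<le> \<lceil>1 / \<alpha>\<rceil>"
    using assms(1) by (simp add: le_ceiling_iff)
  then have groups: "nat (2 * \<lceil>1 / \<alpha>\<rceil> - 1) = 2 * k - 1" and "1 \<le> k"
    unfolding k_def by linarith+
  have "1 / \<alpha> \<le> real k"
    unfolding k_def using ceiling_pos by linarith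
  then have "(\<Sum>l\<in>{1..<Suc n}. a l) \<le> real k * \<alpha>"
    using assms(1,4) atLeastLessThanSuc_atLeastAtMost by (simp add: field_simps)
  then obtain g where "bounded_grouping a \<alpha> (2 * k - 1) {1..<Suc n} g"
    using interval_bounded_grouping[OF \<open>1 \<le> k\<close>] assms(1,3) by fastforce
  then show ?thesis
    unfolding groups bounded_grouping_def atLeastLessThanSuc_atLeastAtMost by blast
qed

end
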